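(* Let $({\mathcal B};{\mathcal V},{\mathcal H};{\mathcal P})$ be a slim (discrete) double groupoid satisfying the filling condition. On ${\mathcal V}\times_{b,l}{\mathcal H}=\{(v,h)\in{\mathcal V}\times{\mathcal H}: b(v)=l(h)\}$ define $(v_1,h_1)\sim_{\mathcal B}(v_2,h_2)$ iff $r(h_1)=r(h_2)$, $t(v_1)=t(v_2)$ and $v_1h_1h_2^{-1}v_2^{-1}\in J_\circledast({\mathcal B})$. Then $\sim_{\mathcal B}$ is an equivalence relation, and the map $$\phi:({\mathcal V}\times_{b,l}{\mathcal H})/\!\sim_{\mathcal B}\ \to{\mathcal D}({\mathcal B}),\qquad [v,h]\mapsto j(v)i(h)$$ is well defined and is a bijection (of quivers over ${\mathcal P}$, i.e. compatible with the maps to ${\mathcal P}$ given by $[v,h]\mapsto t(v)$, $[v,h]\mapsto r(h)$ and the source/target of ${\mathcal D}({\mathcal B})$).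
   Context: A (discrete) double groupoid $({\mathcal B};{\mathcal V},{\mathcal H};{\mathcal P})$: ${\mathcal V}$ and ${\mathcal H}$ are groupoids over ${\mathcal P}$; for ${\mathcal V}$ source/end are $t,b$, for ${\mathcal H}$ source/end are $l,r$. ${\mathcal B}$ is a set of "boxes" $A$ with sides $t(A),b(A)\in{\mathcal H}$, $l(A),r(A)\in{\mathcal V}$ (with $l(t(A))=t(l(A))$, $r(t(A))=t(r(A))$, $l(b(A))=b(l(A))$, $r(b(A))=b(r(A))$), carrying a horizontal groupoid structure over ${\mathcal V}$ (source $l$, target $r$; product $AB$ when $r(A)=l(B)$, with $t(AB)=t(A)t(B)$, $b(AB)=b(A)b(B)$) and a vertical groupoid structure over ${\mathcal H}$ (source $t$, target $b$; product when $b(A)=t(B)$, with left and right sides multiplied), the structure maps of each being morphisms for the other. It is slim if each box is determined by its four sides. It satisfies the filling condition if for every $x\in{\mathcal H}$, $f\in{\mathcal V}$ with $l(x)=t(f)$ there is a box $A$ with $t(A)=x$, $l(A)=f$; by symmetry of the axioms (using inverses) any "corner" of two compatible sides can be completed to a box. ${\mathcal V}\circledast{\mathcal H}$ is the free product groupoid over ${\mathcal P}$ of ${\mathcal V}$ and ${\mathcal H}$ (generated by ${\mathcal V}$ and ${\mathcal H}$ glued along identities, with words of composable arrows). For a box $A$ with top $x$, right $g$, bottom $y$, left $h$, set $[A]=xgy^{-1}h^{-1}\in{\mathcal V}\circledast{\mathcal H}$; $J_\circledast({\mathcal B})$ is the subgroupoid generated by all $[A]$, a normal group bundle. The diagonal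 groupoid is ${\mathcal D}({\mathcal B})=({\mathcal V}\circledast{\mathcal H})/J_\circledast({\mathcal B})$, and $i:{\mathcal H}\to{\mathcal D}({\mathcal B})$, $j:{\mathcal V}\to{\mathcal D}({\mathcal B})$ are the compositions of the natural inclusions with the projection. *)

theory Defs
  imports Main
begin

section \<open>Groupoids (composition written diagrammatically: g_comp G f g = "f then g")\<close>

record ('o,'a) grpd =
  g_arr  :: "'a set"
  g_src  :: "'a \<Rightarrow> 'o"
  g_tgt  :: "'a \<Rightarrow> 'o"
  g_id   :: "'o \<Rightarrow> 'a"
  g_comp :: "'a \<Rightarrow> 'a \<Rightarrow> 'a"
  g_inv  :: "'a \<Rightarrow> 'a"

definition groupoid :: "'o set \<Rightarrow> ('o,'a) grpd \<Rightarrow> bool" where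
  "groupoid Ob G \<longleftrightarrow>
    (\<forall>f\<in>g_arr G. g_src G f \<in> Ob \<and> g_tgt G f \<in> Ob) \<and>
    (\<forall>x\<in>Ob. g_id G x \<in> g_arr G \<and> g_src G (g_id G x) = x \<and> g_tgt G (g_id G x) = x) \<and>
    (\<forall>f\<in>g_arr G. \<forall>g\<in>g_arr G. g_tgt G f = g_src G g \<longrightarrow>
        g_comp G f g \<in> g_arr G \<and> g_src G (g_comp G f g) = g_src G f \<and>
        g_tgt G (g_comp G f g) = g_tgt G g) \<and>
    (\<forall>f\<in>g_arr G. \<forall>g\<in>g_arr G. \<forall>h\<in>g_arr G.
        g_tgt G f = g_src G g \<longrightarrow> g_tgt G g = g_src G h \<longrightarrow>
        g_comp G (g_comp G f g) h = g_comp G f (g_comp G g h)) \<and>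
    (\<forall>f\<in>g_arr G. g_comp G (g_id G (g_src G f)) f = f \<and> g_comp G f (g_id G (g_tgt G f)) = f) \<and>
    (\<forall>f\<in>g_arr G. g_inv G f \<in> g_arr G \<and> g_src G (g_inv G f) = g_tgt G f \<and>
        g_tgt G (g_inv G f) = g_src G f \<and>
        g_comp G f (g_inv G f) = g_id G (g_src G f) \<and>
        g_comp G (g_inv G f) f = g_id G (g_tgt G f))"

text \<open>dg_V: vertical groupoid over the objects (source t, target b);
  dg_H: horizontal groupoid over the objects (source l, target r);
  dg_BH: horizontal groupoid structure on boxes over the vertical arrows (source l, target r);
  dg_BV: vertical groupoid structure on boxes over the horizontal arrows (source t, target b).\<close>

record ('p,'v,'h,'b) dgrpd =
  dg_obj :: "'p set"
  dg_V   :: "('p,'v) grpd"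
  dg_H   :: "('p,'h) grpd"
  dg_BH  :: "('v,'b) grpd"
  dg_BV  :: "('h,'b) grpd"

abbreviation boxes where "boxes D \<equiv> g_arr (dg_BH D)"
abbreviation btop  where "btop D \<equiv> g_src (dg_BV D)"
abbreviation bbot  where "bbot D \<equiv> g_tgt (dg_BV D)"
abbreviation blft  where "blft D \<equiv> g_src (dg_BH D)"
abbreviation brgt  where "brgt D \<equiv> g_tgt (dg_BH D)"
abbreviation vt where "vt D \<equiv> g_src (dg_V D)"
abbreviation vb where "vb D \<equiv> g_tgt (dg_V D)"
abbreviation hl where "hl D \<equiv> g_src (dg_H D)"
abbreviation hr where "hr D \<equiv> g_tgt (dg_H D)"

definition double_groupoid :: "('p,'v,'h,'b) dgrpd \<Rightarrow> bool" where
  "double_groupoid D \<longleftrightarrow>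
    groupoid (dg_obj D) (dg_V D) \<and> groupoid (dg_obj D) (dg_H D) \<and>
    groupoid (g_arr (dg_V D)) (dg_BH D) \<and> groupoid (g_arr (dg_H D)) (dg_BV D) \<and>
    g_arr (dg_BV D) = g_arr (dg_BH D) \<and>
    \<comment> \<open>corners\<close>
    (\<forall>A\<in>boxes D. hl D (btop D A) = vt D (blft D A) \<and> hr D (btop D A) = vt D (brgt D A) \<and>
                  hl D (bbot D A) = vb D (blft D A) \<and> hr D (bbot D A) = vb D (brgt D A)) \<and>
    \<comment> \<open>t, b are morphisms for the horizontal structure\<close>
    (\<forall>A\<in>boxes D. \<forall>B\<in>boxes D. brgt D A = blft D B \<longrightarrow>
        btop D (g_comp (dg_BH D) A B) = g_comp (dg_H D) (btop D A) (btop D B) \<and>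
        bbot D (g_comp (dg_BH D) A B) = g_comp (dg_H D) (bbot D A) (bbot D B)) \<and>
    (\<forall>f\<in>g_arr (dg_V D). btop D (g_id (dg_BH D) f) = g_id (dg_H D) (vt D f) \<and>
                        bbot D (g_id (dg_BH D) f) = g_id (dg_H D) (vb D f)) \<and>
    \<comment> \<open>l, r are morphisms for the vertical structure\<close>
    (\<forall>A\<in>boxes D. \<forall>B\<in>boxes D. bbot D A = btop D B \<longrightarrow>
        blft D (g_comp (dg_BV D) A B) = g_comp (dg_V D) (blft D A) (blft D B) \<and>
        brgt D (g_comp (dg_BV D) A B) = g_comp (dg_V D) (brgt D A) (brgt D B)) \<and>
    (\<forall>x\<in>g_arr (dg_H D). blft D (g_id (dg_BV D) x) = g_id (dg_V D) (hl D x) \<and>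
                        brgt D (g_id (dg_BV D) x) = g_id (dg_V D) (hr D x)) \<and>
    \<comment> \<open>horizontal composition and identities are morphisms for the vertical structure\<close>
    (\<forall>A\<in>boxes D. \<forall>B\<in>boxes D. \<forall>C\<in>boxes D. \<forall>E\<in>boxes D.
        brgt D A = blft D B \<longrightarrow> brgt D C = blft D E \<longrightarrow>
        bbot D A = btop D C \<longrightarrow> bbot D B = btop D E \<longrightarrow>
        g_comp (dg_BV D) (g_comp (dg_BH D) A B) (g_comp (dg_BH D) C E) =
        g_comp (dg_BH D) (g_comp (dg_BV D) A C) (g_comp (dg_BV D) B E)) \<and>
    (\<forall>f\<in>g_arr (dg_V D). \<forall>g\<in>g_arr (dg_V D). vb D f = vt D g \<longrightarrow>
        g_id (dg_BH D) (g_comp (dg_V D) f g) = g_comp (dg_BV D) (g_id (dg_BH D) f) (g_id (dg_BH D) g)) \<and>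
    (\<forall>x\<in>g_arr (dg_H D). \<forall>y\<in>g_arr (dg_H D). hr D x = hl D y \<longrightarrow>
        g_id (dg_BV D) (g_comp (dg_H D) x y) = g_comp (dg_BH D) (g_id (dg_BV D) x) (g_id (dg_BV D) y)) \<and>
    (\<forall>p\<in>dg_obj D. g_id (dg_BH D) (g_id (dg_V D) p) = g_id (dg_BV D) (g_id (dg_H D) p))"

definition slim :: "('p,'v,'h,'b) dgrpd \<Rightarrow> bool" where
  "slim D \<longleftrightarrow> (\<forall>A\<in>boxes D. \<forall>B\<in>boxes D.
     btop D A = btop D B \<and> bbot D A = bbot D B \<and> blft D A = blft D B \<and> brgt D A = brgt D B \<longrightarrow> A = B)"

definition filling :: "('p,'v,'h,'b) dgrpd \<Rightarrow> bool" where
  "filling D \<longleftrightarrow> (\<forall>x\<in>g_arr (dg_H D). \<forall>f\<in>g_arr (dg_V D). hl D x = vt D f \<longrightarrow>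
     (\<exists>A\<in>boxes D. btop D A = x \<and> blft D A = f))"

section \<open>The free product groupoid V \<circledast> H: words of composable arrows modulo merging and
  deleting identities (identities of V and H glued)\<close>

definition lok :: "('p,'v,'h,'b) dgrpd \<Rightarrow> 'v + 'h \<Rightarrow> bool" where
  "lok D a = (case a of Inl v \<Rightarrow> v \<in> g_arr (dg_V D) | Inr h \<Rightarrow> h \<in> g_arr (dg_H D))"
definition lsrc :: "('p,'v,'h,'b) dgrpd \<Rightarrow> 'v + 'h \<Rightarrow> 'p" where
  "lsrc D a = (case a of Inl v \<Rightarrow> vt D v | Inr h \<Rightarrow> hl D h)"
definition ltgt :: "('p,'v,'h,'b) dgrpd \<Rightarrow> 'v + 'h \<Rightarrow> 'p" where
  "ltgt D a = (case a of Inl v \<Rightarrow> vb D v | Inr h \<Rightarrow> hr D h)"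
definition linv :: "('p,'v,'h,'b) dgrpd \<Rightarrow> 'v + 'h \<Rightarrow> 'v + 'h" where
  "linv D a = (case a of Inl v \<Rightarrow> Inl (g_inv (dg_V D) v) | Inr h \<Rightarrow> Inr (g_inv (dg_H D) h))"

primrec walk :: "('p,'v,'h,'b) dgrpd \<Rightarrow> 'p \<Rightarrow> ('v + 'h) list \<Rightarrow> 'p \<Rightarrow> bool" where
  "walk D p [] q = (p = q \<and> p \<in> dg_obj D)"
| "walk D p (a # w) q = (lok D a \<and> lsrc D a = p \<and> walk D (ltgt D a) w q)"

type_synonym ('p,'v,'h) path = "'p \<times> ('v + 'h) list \<times> 'p"

definition paths :: "('p,'v,'h,'b) dgrpd \<Rightarrow> ('p,'v,'h) path set" where
  "paths D = {(p, w, q). walk D p w q}"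

definition pconc :: "('p,'v,'h) path \<Rightarrow> ('p,'v,'h) path \<Rightarrow> ('p,'v,'h) path" where
  "pconc \<pi> \<sigma> = (fst \<pi>, fst (snd \<pi>) @ fst (snd \<sigma>), snd (snd \<sigma>))"

definition pinv :: "('p,'v,'h,'b) dgrpd \<Rightarrow> ('p,'v,'h) path \<Rightarrow> ('p,'v,'h) path" where
  "pinv D \<pi> = (snd (snd \<pi>), rev (map (linv D) (fst (snd \<pi>))), fst \<pi>)"

inductive fp_step :: "('p,'v,'h,'b) dgrpd \<Rightarrow> ('v + 'h) list \<Rightarrow> ('v + 'h) list \<Rightarrow> bool"
  for D where
  mergeV: "\<lbrakk>f \<in> g_arr (dg_V D); g \<in> g_arr (dg_V D); vb D f = vt D g\<rbrakk> \<Longrightarrow>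
     fp_step D (u @ Inl f # Inl g # w) (u @ Inl (g_comp (dg_V D) f g) # w)"
| mergeH: "\<lbrakk>f \<in> g_arr (dg_H D); g \<in> g_arr (dg_H D); hr D f = hl D g\<rbrakk> \<Longrightarrow>
     fp_step D (u @ Inr f # Inr g # w) (u @ Inr (g_comp (dg_H D) f g) # w)"
| idV: "p \<in> dg_obj D \<Longrightarrow> fp_step D (u @ Inl (g_id (dg_V D) p) # w) (u @ w)"
| idH: "p \<in> dg_obj D \<Longrightarrow> fp_step D (u @ Inr (g_id (dg_H D) p) # w) (u @ w)"

definition fp_rel :: "('p,'v,'h,'b) dgrpd \<Rightarrow> (('p,'v,'h) path \<times> ('p,'v,'h) path) set" where
  "fp_rel D = {(\<pi>, \<sigma>). \<pi> \<in> paths D \<and> \<sigma> \<in> paths D \<and> fst \<pi> = fst \<sigma> \<and>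
                       snd (snd \<pi>) = snd (snd \<sigma>) \<and> fp_step D (fst (snd \<pi>)) (fst (snd \<sigma>))}"

definition fp_eq :: "('p,'v,'h,'b) dgrpd \<Rightarrow> (('p,'v,'h) path \<times> ('p,'v,'h) path) set" where
  "fp_eq D = (fp_rel D \<union> (fp_rel D)\<inverse>)\<^sup>* \<inter> (paths D \<times> paths D)"

definition fpcls :: "('p,'v,'h,'b) dgrpd \<Rightarrow> ('p,'v,'h) path \<Rightarrow> ('p,'v,'h) path set" where
  "fpcls D \<pi> = fp_eq D `` {\<pi>}"

definition FP :: "('p,'v,'h,'b) dgrpd \<Rightarrow> ('p, ('p,'v,'h) path set) grpd" where
  "FP D = \<lparr> g_arr = paths D // fp_eq D,
            g_src = (\<lambda>X. fst (SOME \<pi>. \<pi> \<in> X)),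
            g_tgt = (\<lambda>X. snd (snd (SOME \<pi>. \<pi> \<in> X))),
            g_id = (\<lambda>p. fpcls D (p, [], p)),
            g_comp = (\<lambda>X Y. fpcls D (pconc (SOME \<pi>. \<pi> \<in> X) (SOME \<sigma>. \<sigma> \<in> Y))),
            g_inv = (\<lambda>X. fpcls D (pinv D (SOME \<pi>. \<pi> \<in> X))) \<rparr>"

definition box_word :: "('p,'v,'h,'b) dgrpd \<Rightarrow> 'b \<Rightarrow> ('p,'v,'h) path set" where
  "box_word D A = fpcls D (hl D (btop D A),
     [Inr (btop D A), Inl (brgt D A), Inr (g_inv (dg_H D) (bbot D A)), Inl (g_inv (dg_V D) (blft D A))],
     hl D (btop D A))"

inductive_set Jfp :: "('p,'v,'h,'b) dgrpd \<Rightarrow> ('p,'v,'h) path set set" for D where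
  gen: "A \<in> boxes D \<Longrightarrow> box_word D A \<in> Jfp D"
| comp: "\<lbrakk>X \<in> Jfp D; Y \<in> Jfp D; g_tgt (FP D) X = g_src (FP D) Y\<rbrakk> \<Longrightarrow> g_comp (FP D) X Y \<in> Jfp D"
| inv: "X \<in> Jfp D \<Longrightarrow> g_inv (FP D) X \<in> Jfp D"

definition Deq :: "('p,'v,'h,'b) dgrpd \<Rightarrow> (('p,'v,'h) path set \<times> ('p,'v,'h) path set) set" where
  "Deq D = {(X, Y). X \<in> g_arr (FP D) \<and> Y \<in> g_arr (FP D) \<and>
      g_src (FP D) X = g_src (FP D) Y \<and> g_tgt (FP D) X = g_tgt (FP D) Y \<and>
      g_comp (FP D) X (g_inv (FP D) Y) \<in> Jfp D}"

definition Dg :: "('p,'v,'h,'b) dgrpd \<Rightarrow> ('p, ('p,'v,'h) path set set) grpd" where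
  "Dg D = \<lparr> g_arr = g_arr (FP D) // Deq D,
            g_src = (\<lambda>Z. g_src (FP D) (SOME X. X \<in> Z)),
            g_tgt = (\<lambda>Z. g_tgt (FP D) (SOME X. X \<in> Z)),
            g_id = (\<lambda>p. Deq D `` {g_id (FP D) p}),
            g_comp = (\<lambda>Z W. Deq D `` {g_comp (FP D) (SOME X. X \<in> Z) (SOME Y. Y \<in> W)}),
            g_inv = (\<lambda>Z. Deq D `` {g_inv (FP D) (SOME X. X \<in> Z)}) \<rparr>"

definition jD :: "('p,'v,'h,'b) dgrpd \<Rightarrow> 'v \<Rightarrow> ('p,'v,'h) path set set" where
  "jD D v = Deq D `` {fpcls D (vt D v, [Inl v], vb D v)}"

definition iD :: "('p,'v,'h,'b) dgrpd \<Rightarrow> 'h \<Rightarrow> ('p,'v,'h) path set set" where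
  "iD D h = Deq D `` {fpcls D (hl D h, [Inr h], hr D h)}"

definition VxH :: "('p,'v,'h,'b) dgrpd \<Rightarrow> ('v \<times> 'h) set" where
  "VxH D = {(v, h). v \<in> g_arr (dg_V D) \<and> h \<in> g_arr (dg_H D) \<and> vb D v = hl D h}"

definition simB :: "('p,'v,'h,'b) dgrpd \<Rightarrow> (('v \<times> 'h) \<times> ('v \<times> 'h)) set" where
  "simB D = {((v1, h1), (v2, h2)). (v1, h1) \<in> VxH D \<and> (v2, h2) \<in> VxH D \<and>
      hr D h1 = hr D h2 \<and> vt D v1 = vt D v2 \<and>
      fpcls D (vt D v1, [Inl v1, Inr h1, Inr (g_inv (dg_H D) h2), Inl (g_inv (dg_V D) v2)], vt D v2)
        \<in> Jfp D}"

definition phi0 :: "('p,'v,'h,'b) dgrpd \<Rightarrow> 'v \<times> 'h \<Rightarrow> ('p,'v,'h) path set set" where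
  "phi0 D vh = g_comp (Dg D) (jD D (fst vh)) (iD D (snd vh))"

definition phi :: "('p,'v,'h,'b) dgrpd \<Rightarrow> ('v \<times> 'h) set \<Rightarrow> ('p,'v,'h) path set set" where
  "phi D c = the_elem (phi0 D ` c)"

end

theory Submission
  imports Defs
begin

(* The key algebraic fact is that J(B) is normal: by the
   filling condition, the conjugate of a generator [A] by a letter is, up to word equivalence,
   [B]^-1 [BA] or [BA] [B]^-1 for a box B filling the corner formed by the letter and A. Normality
   makes "equal modulo J(B)" (`JE`) a congruence, and it describes equality in D(B).
   By unfolding, ~B is exactly the kernel of phi0 (v, h) = j(v) i(h); so, by a general fact about
   quotients by kernels (proved first), phi is well defined and injective on classes. Surjectivity
   is a normal-form argument: using filling boxes to move horizontal letters past vertical ones,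
   every word is congruent modulo J(B) to a word v h. *)

section \<open>Quotients by the kernel of a map\<close>

definition ker_rel :: "'a set \<Rightarrow> ('a \<Rightarrow> 'b) \<Rightarrow> ('a \<times> 'a) set" where
  "ker_rel A f = {(x, y). x \<in> A \<and> y \<in> A \<and> f x = f y}"

lemma equiv_ker_rel: "equiv A (ker_rel A f)"
  by (auto simp: equiv_def refl_on_def sym_def trans_def ker_rel_def)

lemma ker_rel_respects: "f respects ker_rel A f"
  by (simp add: congruent_def ker_rel_def)

lemma ker_rel_class_image: "x \<in> A \<Longrightarrow> the_elem (f ` (ker_rel A f `` {x})) = f x"
  by (rule the_elem_image_unique) (auto simp: ker_rel_def)

lemma ker_rel_bij: "bij_betw (\<lambda>c. the_elem (f ` c)) (A // ker_rel A f) (f ` A)"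
proof (rule bij_betw_imageI)
  show "inj_on (\<lambda>c. the_elem (f ` c)) (A // ker_rel A f)"
  proof (rule inj_onI)
    fix c1 c2
    assume "c1 \<in> A // ker_rel A f" "c2 \<in> A // ker_rel A f" "the_elem (f ` c1) = the_elem (f ` c2)"
    then obtain x1 x2 where "x1 \<in> A" "c1 = ker_rel A f `` {x1}" "x2 \<in> A" "c2 = ker_rel A f `` {x2}"
      "f x1 = f x2"
      by (auto elim!: quotientE simp: ker_rel_class_image)
    then show "c1 = c2" using equiv_class_eq[OF equiv_ker_rel] by (simp add: ker_rel_def)
  qed
  show "(\<lambda>c. the_elem (f ` c)) ` (A // ker_rel A f) = f ` A"
    by (force elim!: quotientE intro: quotientI simp: ker_rel_class_image)
qed

section \<open>Groupoid algebra\<close>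

locale gpd =
  fixes Ob :: "'o set" and G :: "('o,'a) grpd"
  assumes gpd: "groupoid Ob G"
begin

abbreviation "arr \<equiv> g_arr G"
abbreviation "src \<equiv> g_src G"
abbreviation "tgt \<equiv> g_tgt G"
abbreviation "cmp \<equiv> g_comp G"
abbreviation "ide \<equiv> g_id G"
abbreviation "iv \<equiv> g_inv G"

lemma src_ob[simp]: "f \<in> arr \<Longrightarrow> src f \<in> Ob"
  and tgt_ob[simp]: "f \<in> arr \<Longrightarrow> tgt f \<in> Ob"
  and id_arr[simp]: "x \<in> Ob \<Longrightarrow> ide x \<in> arr"
  and src_id[simp]: "x \<in> Ob \<Longrightarrow> src (ide x) = x"
  and tgt_id[simp]: "x \<in> Ob \<Longrightarrow> tgt (ide x) = x"
  and comp_arr[simp]: "f \<in> arr \<Longrightarrow> g \<in> arr \<Longrightarrow> tgt f = src g \<Longrightarrow> cmp f g \<in> arr"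
  and src_comp[simp]: "f \<in> arr \<Longrightarrow> g \<in> arr \<Longrightarrow> tgt f = src g \<Longrightarrow> src (cmp f g) = src f"
  and tgt_comp[simp]: "f \<in> arr \<Longrightarrow> g \<in> arr \<Longrightarrow> tgt f = src g \<Longrightarrow> tgt (cmp f g) = tgt g"
  and id_left[simp]: "f \<in> arr \<Longrightarrow> x = src f \<Longrightarrow> cmp (ide x) f = f"
  and id_right[simp]: "f \<in> arr \<Longrightarrow> x = tgt f \<Longrightarrow> cmp f (ide x) = f"
  and inv_arr[simp]: "f \<in> arr \<Longrightarrow> iv f \<in> arr"
  and src_inv[simp]: "f \<in> arr \<Longrightarrow> src (iv f) = tgt f"
  and tgt_inv[simp]: "f \<in> arr \<Longrightarrow> tgt (iv f) = src f"
  and inv_r[simp]: "f \<in> arr \<Longrightarrow> cmp f (iv f) = ide (src f)"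
  and inv_l[simp]: "f \<in> arr \<Longrightarrow> cmp (iv f) f = ide (tgt f)"
  using gpd unfolding groupoid_def by blast+

lemma assoc:
  "f \<in> arr \<Longrightarrow> g \<in> arr \<Longrightarrow> h \<in> arr \<Longrightarrow> tgt f = src g \<Longrightarrow> tgt g = src h \<Longrightarrow>
   cmp (cmp f g) h = cmp f (cmp g h)"
  using gpd unfolding groupoid_def by blast

lemma inv_unique:
  assumes "f \<in> arr" "g \<in> arr" "tgt f = src g" "cmp f g = ide (src f)"
  shows "g = iv f"
proof -
  have "g = cmp (cmp (iv f) f) g" using assms(1-3) by simp
  also have "\<dots> = cmp (iv f) (cmp f g)" by (rule assoc) (use assms in auto)
  also have "\<dots> = iv f" using assms by simp
  finally show ?thesis .
qed

lemma inv_inv[simp]: "f \<in> arr \<Longrightarrow> iv (iv f) = f"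
  by (metis inv_l inv_arr inv_unique src_inv tgt_inv)

lemma inv_id[simp]: "x \<in> Ob \<Longrightarrow> iv (ide x) = ide x"
  by (metis id_arr id_left inv_unique src_id tgt_id)

lemma cancel_left: "f \<in> arr \<Longrightarrow> g \<in> arr \<Longrightarrow> tgt f = src g \<Longrightarrow> cmp (iv f) (cmp f g) = g"
  by (metis assoc inv_arr inv_l id_left src_inv tgt_inv)

lemma inv_comp:
  assumes "f \<in> arr" "g \<in> arr" "tgt f = src g"
  shows "iv (cmp f g) = cmp (iv g) (iv f)"
proof -
  have "cmp (cmp f g) (cmp (iv g) (iv f)) = cmp f (cmp g (cmp (iv g) (iv f)))"
    using assms by (simp add: assoc)
  also have "\<dots> = cmp f (iv f)"
    using assms assoc[of g "iv g" "iv f"] by simp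
  finally show ?thesis using assms by (intro inv_unique[symmetric]) auto
qed

lemma inv_comp_cancel:
  assumes "f \<in> arr" "g \<in> arr" "tgt f = src g"
  shows "cmp (iv (cmp f g)) f = iv g"
proof -
  have "cmp (iv (cmp f g)) f = cmp (iv g) (cmp (iv f) f)"
    using assms by (simp add: inv_comp assoc)
  then show ?thesis using assms by simp
qed

end

section \<open>Double groupoids with the filling condition\<close>

locale filling_double_groupoid =
  fixes D :: "('p,'v,'h,'b) dgrpd"
  assumes dg: "double_groupoid D" and fill: "filling D"

sublocale filling_double_groupoid \<subseteq> V: gpd "dg_obj D" "dg_V D"
  using dg by unfold_locales (simp add: double_groupoid_def)
sublocale filling_double_groupoid \<subseteq> H: gpd "dg_obj D" "dg_H D"
  using dg by unfold_locales (simp add: double_groupoid_def)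
sublocale filling_double_groupoid \<subseteq> BH: gpd "g_arr (dg_V D)" "dg_BH D"
  using dg by unfold_locales (simp add: double_groupoid_def)
sublocale filling_double_groupoid \<subseteq> BV: gpd "g_arr (dg_H D)" "dg_BV D"
  using dg by unfold_locales (simp add: double_groupoid_def)

context filling_double_groupoid
begin

lemma BV_arr: "g_arr (dg_BV D) = boxes D"
  using dg by (simp add: double_groupoid_def)

lemma box_top[simp]: "A \<in> boxes D \<Longrightarrow> btop D A \<in> g_arr (dg_H D)"
  and box_bot[simp]: "A \<in> boxes D \<Longrightarrow> bbot D A \<in> g_arr (dg_H D)"
  and box_lft[simp]: "A \<in> boxes D \<Longrightarrow> blft D A \<in> g_arr (dg_V D)"
  and box_rgt[simp]: "A \<in> boxes D \<Longrightarrow> brgt D A \<in> g_arr (dg_V D)"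
  using BV.src_ob BV.tgt_ob BH.src_ob BH.tgt_ob BV_arr by blast+

lemma corner_tl: "A \<in> boxes D \<Longrightarrow> vt D (blft D A) = hl D (btop D A)"
  and corner_tr: "A \<in> boxes D \<Longrightarrow> vt D (brgt D A) = hr D (btop D A)"
  and corner_bl: "A \<in> boxes D \<Longrightarrow> vb D (blft D A) = hl D (bbot D A)"
  and corner_br: "A \<in> boxes D \<Longrightarrow> vb D (brgt D A) = hr D (bbot D A)"
  using dg unfolding double_groupoid_def by auto

lemma hcomp_top: "A \<in> boxes D \<Longrightarrow> B \<in> boxes D \<Longrightarrow> brgt D A = blft D B \<Longrightarrow>
    btop D (BH.cmp A B) = H.cmp (btop D A) (btop D B)"
  and hcomp_bot: "A \<in> boxes D \<Longrightarrow> B \<in> boxes D \<Longrightarrow> brgt D A = blft D B \<Longrightarrow>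
    bbot D (BH.cmp A B) = H.cmp (bbot D A) (bbot D B)"
  and vcomp_lft: "A \<in> boxes D \<Longrightarrow> B \<in> boxes D \<Longrightarrow> bbot D A = btop D B \<Longrightarrow>
    blft D (BV.cmp A B) = V.cmp (blft D A) (blft D B)"
  and vcomp_rgt: "A \<in> boxes D \<Longrightarrow> B \<in> boxes D \<Longrightarrow> bbot D A = btop D B \<Longrightarrow>
    brgt D (BV.cmp A B) = V.cmp (brgt D A) (brgt D B)"
  and hid_top: "f \<in> g_arr (dg_V D) \<Longrightarrow> btop D (BH.ide f) = H.ide (vt D f)"
  and vid_lft: "x \<in> g_arr (dg_H D) \<Longrightarrow> blft D (BV.ide x) = V.ide (hl D x)"
  using dg unfolding double_groupoid_def by blast+

lemma top_hinv:
  assumes A: "A \<in> boxes D"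
  shows "btop D (BH.iv A) = H.iv (btop D A)"
proof (rule H.inv_unique)
  have c: "brgt D A = blft D (BH.iv A)" using A by simp
  show "H.cmp (btop D A) (btop D (BH.iv A)) = H.ide (hl D (btop D A))"
    using hcomp_top[OF A _ c] A by (simp add: hid_top corner_tl)
  show "hr D (btop D A) = hl D (btop D (BH.iv A))"
    using A c by (metis BH.inv_arr corner_tl corner_tr)
qed (use A in auto)

lemma lft_vinv:
  assumes A: "A \<in> boxes D"
  shows "blft D (BV.iv A) = V.iv (blft D A)"
proof (rule V.inv_unique)
  have AV: "A \<in> g_arr (dg_BV D)" using A BV_arr by simp
  have A': "BV.iv A \<in> boxes D" using BV.inv_arr[OF AV] BV_arr by simp
  have c: "bbot D A = btop D (BV.iv A)" using AV by simp
  show "V.cmp (blft D A) (blft D (BV.iv A)) = V.ide (vt D (blft D A))"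
    using vcomp_lft[OF A A' c] AV A by (simp add: vid_lft corner_tl)
  show "vb D (blft D A) = vt D (blft D (BV.iv A))"
    using A A' c by (metis corner_bl corner_tl)
qed (use A BV_arr BV.inv_arr in auto)

text \<open>The filling condition completes a top-left corner; by inverting boxes it also completes
  top-right and bottom-left corners.\<close>
lemma fill_tl: "x \<in> g_arr (dg_H D) \<Longrightarrow> f \<in> g_arr (dg_V D) \<Longrightarrow> hl D x = vt D f \<Longrightarrow>
    \<exists>A\<in>boxes D. btop D A = x \<and> blft D A = f"
  using fill unfolding filling_def by blast

lemma fill_tr:
  assumes "k \<in> g_arr (dg_H D)" "g \<in> g_arr (dg_V D)" "hr D k = vt D g"
  shows "\<exists>B\<in>boxes D. btop D B = k \<and> brgt D B = g"
proof -
  obtain A where A: "A \<in> boxes D" "btop D A = H.iv k" "blft D A = g"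
    using fill_tl[of "H.iv k" g] assms by auto
  show ?thesis
    by (rule bexI[of _ "BH.iv A"]) (use A assms top_hinv in auto)
qed

lemma fill_bl:
  assumes "x \<in> g_arr (dg_H D)" "f \<in> g_arr (dg_V D)" "vb D f = hl D x"
  shows "\<exists>B\<in>boxes D. bbot D B = x \<and> blft D B = f"
proof -
  obtain A where A: "A \<in> boxes D" "btop D A = x" "blft D A = V.iv f"
    using fill_tl[of x "V.iv f"] assms by auto
  have AV: "A \<in> g_arr (dg_BV D)" using A BV_arr by simp
  show ?thesis
    by (rule bexI[of _ "BV.iv A"]) (use A AV assms lft_vinv BV_arr BV.inv_arr in auto)
qed

section \<open>Words in the free product \<open>V \<circledast> H\<close>\<close>

lemma letter_simps[simp]:
  "lok D (Inl f) = (f \<in> g_arr (dg_V D))" "lok D (Inr x) = (x \<in> g_arr (dg_H D))"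
  "lsrc D (Inl f) = vt D f" "lsrc D (Inr x) = hl D x"
  "ltgt D (Inl f) = vb D f" "ltgt D (Inr x) = hr D x"
  "linv D (Inl f) = Inl (V.iv f)" "linv D (Inr x) = Inr (H.iv x)"
  by (simp_all add: lok_def lsrc_def ltgt_def linv_def)

lemma linv_letter[simp]:
  "lok D a \<Longrightarrow> lok D (linv D a)"
  "lok D a \<Longrightarrow> lsrc D (linv D a) = ltgt D a"
  "lok D a \<Longrightarrow> ltgt D (linv D a) = lsrc D a"
  "lok D a \<Longrightarrow> linv D (linv D a) = a"
  "lok D a \<Longrightarrow> lsrc D a \<in> dg_obj D"
  "lok D a \<Longrightarrow> ltgt D a \<in> dg_obj D"
  by (cases a; simp)+

abbreviation rv :: "('v + 'h) list \<Rightarrow> ('v + 'h) list" where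
  "rv w \<equiv> rev (map (linv D) w)"

lemma walk_obj: "walk D p w q \<Longrightarrow> p \<in> dg_obj D \<and> q \<in> dg_obj D"
  by (induction w arbitrary: p) auto

lemma walk_append: "walk D p (u @ w) q \<longleftrightarrow> (\<exists>r. walk D p u r \<and> walk D r w q)"
  by (induction u arbitrary: p) (auto dest: walk_obj)

lemma walk_rev: "walk D p w q \<Longrightarrow> walk D q (rv w) p"
  by (induction w arbitrary: p) (auto simp: walk_append dest: walk_obj)

lemma rv_rv: "walk D p w q \<Longrightarrow> rv (rv w) = w"
  by (induction w arbitrary: p) auto

lemma step_walk: "fp_step D a b \<Longrightarrow> walk D p a q \<Longrightarrow> walk D p b q"
  by (induction rule: fp_step.induct) (auto simp: walk_append)

lemma step_ctx: "fp_step D a b \<Longrightarrow> fp_step D (c @ a @ d) (c @ b @ d)"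
proof (induction rule: fp_step.induct)
  case (mergeV f g u w) then show ?case using fp_step.mergeV[of f D g "c @ u" "w @ d"] by simp
next
  case (mergeH f g u w) then show ?case using fp_step.mergeH[of f D g "c @ u" "w @ d"] by simp
next
  case (idV p u w) then show ?case using fp_step.idV[of p D "c @ u" "w @ d"] by simp
next
  case (idH p u w) then show ?case using fp_step.idH[of p D "c @ u" "w @ d"] by simp
qed

lemma step_rev: "fp_step D a b \<Longrightarrow> fp_step D (rv a) (rv b)"
proof (induction rule: fp_step.induct)
  case (mergeV f g u w) then show ?case
    using fp_step.mergeV[of "V.iv g" D "V.iv f" "rv w" "rv u"] by (simp add: V.inv_comp)
next
  case (mergeH f g u w) then show ?case
    using fp_step.mergeH[of "H.iv g" D "H.iv f" "rv w" "rv u"] by (simp add: H.inv_comp)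
next
  case (idV p u w) then show ?case using fp_step.idV[of p D "rv w" "rv u"] by simp
next
  case (idH p u w) then show ?case using fp_step.idH[of p D "rv w" "rv u"] by simp
qed

definition weq :: "'p \<Rightarrow> 'p \<Rightarrow> ('v + 'h) list \<Rightarrow> ('v + 'h) list \<Rightarrow> bool" where
  "weq p q u w \<longleftrightarrow> ((p, u, q), (p, w, q)) \<in> fp_eq D"

abbreviation R :: "(('p,'v,'h) path \<times> ('p,'v,'h) path) set" where
  "R \<equiv> fp_rel D \<union> (fp_rel D)\<inverse>"

lemma R_ends: "(\<pi>, \<sigma>) \<in> R\<^sup>* \<Longrightarrow> fst \<pi> = fst \<sigma> \<and> snd (snd \<pi>) = snd (snd \<sigma>)"
  by (induction rule: rtrancl_induct) (auto simp: fp_rel_def)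

lemma fp_eq_ends: "(\<pi>, \<sigma>) \<in> fp_eq D \<Longrightarrow> fst \<pi> = fst \<sigma> \<and> snd (snd \<pi>) = snd (snd \<sigma>)"
  unfolding fp_eq_def using R_ends by blast

lemma fp_equiv: "equiv (paths D) (fp_eq D)"
proof -
  have "sym (R\<^sup>*)" by (intro sym_rtrancl) (auto simp: sym_def)
  then show ?thesis unfolding equiv_def refl_on_def sym_def trans_def fp_eq_def
    by (auto intro: rtrancl_trans)
qed

lemma weq_walk: "weq p q u w \<Longrightarrow> walk D p u q \<and> walk D p w q"
  by (auto simp: weq_def fp_eq_def paths_def)

lemma weq_refl: "walk D p u q \<Longrightarrow> weq p q u u"
  using fp_equiv unfolding weq_def equiv_def refl_on_def paths_def by blast

lemma weq_sym: "weq p q u w \<Longrightarrow> weq p q w u"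
  using fp_equiv unfolding weq_def equiv_def sym_def by blast

lemma weq_trans[trans]: "weq p q u w \<Longrightarrow> weq p q w z \<Longrightarrow> weq p q u z"
  using fp_equiv unfolding weq_def equiv_def trans_def by blast

lemma weq_step: "fp_step D a b \<Longrightarrow> walk D p a q \<Longrightarrow> weq p q a b"
  unfolding weq_def fp_eq_def using step_walk[of a b p q]
  by (auto simp: paths_def fp_rel_def)

lemma Rstar_ctx:
  assumes "(\<pi>, \<sigma>) \<in> R\<^sup>*" "\<pi> \<in> paths D" "walk D s c (fst \<pi>)" "walk D (snd (snd \<pi>)) d q"
  shows "((s, c @ fst (snd \<pi>) @ d, q), (s, c @ fst (snd \<sigma>) @ d, q)) \<in> R\<^sup>*"
  using assms(1)
proof (induction rule: rtrancl_induct)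
  case (step \<sigma> \<tau>)
  have ends: "fst \<pi> = fst \<tau> \<and> snd (snd \<pi>) = snd (snd \<tau>)"
    using R_ends[OF step(1)] step(2) by (auto simp: fp_rel_def)
  have "\<sigma> \<in> paths D" "\<tau> \<in> paths D" using step(2) by (auto simp: fp_rel_def)
  then have "walk D s (c @ fst (snd \<sigma>) @ d) q" "walk D s (c @ fst (snd \<tau>) @ d) q"
    using ends R_ends[OF step(1)] assms(3,4) by (fastforce simp: paths_def walk_append)+
  then have "((s, c @ fst (snd \<sigma>) @ d, q), (s, c @ fst (snd \<tau>) @ d, q)) \<in> R"
    using step(2) by (auto simp: fp_rel_def paths_def intro: step_ctx)
  then show ?case using step(3) by (rule rtrancl_into_rtrancl[rotated])
qed simp

lemma Rstar_rev: "(\<pi>, \<sigma>) \<in> R\<^sup>* \<Longrightarrow> (pinv D \<pi>, pinv D \<sigma>) \<in> R\<^sup>*"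
proof (induction rule: rtrancl_induct)
  case (step \<sigma> \<tau>)
  have "(pinv D \<sigma>, pinv D \<tau>) \<in> R"
    using step(2) by (auto simp: fp_rel_def paths_def pinv_def intro: step_rev walk_rev)
  then show ?case using step(3) by (rule rtrancl_into_rtrancl[rotated])
qed simp

lemma weq_ctx: "weq r r' u u' \<Longrightarrow> walk D p c r \<Longrightarrow> walk D r' d q \<Longrightarrow>
    weq p q (c @ u @ d) (c @ u' @ d)"
  unfolding weq_def fp_eq_def
  using Rstar_ctx[of "(r,u,r')" "(r,u',r')" p c d q] by (auto simp: paths_def walk_append)

lemma weq_app: "weq p r u u' \<Longrightarrow> weq r q w w' \<Longrightarrow> weq p q (u @ w) (u' @ w')"
proof -
  assume a: "weq p r u u'" "weq r q w w'"
  have "weq p q (u @ w) (u' @ w)"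
    using weq_ctx[OF a(1), of p "[]" w q] weq_walk[OF a(1)] weq_walk[OF a(2)] walk_obj by auto
  also have "weq p q (u' @ w) (u' @ w')"
    using weq_ctx[OF a(2), of p u' "[]" q] weq_walk[OF a(1)] weq_walk[OF a(2)] walk_obj by auto
  finally show ?thesis .
qed

lemma weq_rev: "weq p q u w \<Longrightarrow> weq q p (rv u) (rv w)"
  unfolding weq_def fp_eq_def using Rstar_rev[of "(p,u,q)" "(p,w,q)"]
  by (auto simp: paths_def pinv_def walk_rev)

lemma weq_mergeV: "walk D p (u @ Inl f # Inl g # w) q \<Longrightarrow>
    weq p q (u @ Inl f # Inl g # w) (u @ Inl (V.cmp f g) # w)"
  by (rule weq_step[OF fp_step.mergeV]) (auto simp: walk_append)

lemma weq_mergeH: "walk D p (u @ Inr x # Inr y # w) q \<Longrightarrow>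
    weq p q (u @ Inr x # Inr y # w) (u @ Inr (H.cmp x y) # w)"
  by (rule weq_step[OF fp_step.mergeH]) (auto simp: walk_append)

lemma weq_cancel: "walk D p (u @ a # linv D a # w) q \<Longrightarrow> weq p q (u @ a # linv D a # w) (u @ w)"
proof (cases a)
  case (Inl f)
  assume wk: "walk D p (u @ a # linv D a # w) q"
  then have f: "f \<in> g_arr (dg_V D)" using Inl by (auto simp: walk_append)
  have "weq p q (u @ a # linv D a # w) (u @ Inl (V.ide (vt D f)) # w)"
    using weq_mergeV[of p u f "V.iv f" w q] wk Inl f by simp
  also have "weq p q \<dots> (u @ w)"
    by (rule weq_step[OF fp_step.idV]) (use wk Inl f in \<open>auto simp: walk_append\<close>)
  finally show ?thesis .
next
  case (Inr x)
  assume wk: "walk D p (u @ a # linv D a # w) q"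
  then have x: "x \<in> g_arr (dg_H D)" using Inr by (auto simp: walk_append)
  have "weq p q (u @ a # linv D a # w) (u @ Inr (H.ide (hl D x)) # w)"
    using weq_mergeH[of p u x "H.iv x" w q] wk Inr x by simp
  also have "weq p q \<dots> (u @ w)"
    by (rule weq_step[OF fp_step.idH]) (use wk Inr x in \<open>auto simp: walk_append\<close>)
  finally show ?thesis .
qed

lemma weq_inv_r: "walk D p w q \<Longrightarrow> weq p p (w @ rv w) []"
proof (induction w arbitrary: p)
  case Nil then show ?case by (auto intro: weq_refl)
next
  case (Cons a w)
  then have a: "lok D a" "lsrc D a = p" "walk D (ltgt D a) w q" by auto
  have "weq p p ([a] @ (w @ rv w) @ [linv D a]) ([a] @ [] @ [linv D a])"
    by (rule weq_ctx[OF Cons.IH[OF a(3)]]) (use a in \<open>auto dest: walk_obj\<close>)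
  then have "weq p p ((a # w) @ rv (a # w)) [a, linv D a]" by simp
  also have "weq p p \<dots> []"
    using weq_cancel[of p "[]" a "[]" p] a by (auto dest: walk_obj)
  finally show ?case .
qed

lemma weq_inv_l: "walk D p w q \<Longrightarrow> weq q q (rv w @ w) []"
  using weq_inv_r[OF walk_rev[of p w q]] rv_rv[of p w q] by simp

section \<open>Computing in \<open>V \<circledast> H\<close> on representatives\<close>

abbreviation Cl :: "('p,'v,'h) path \<Rightarrow> ('p,'v,'h) path set" where
  "Cl \<equiv> fpcls D"

lemma cls_in: "walk D p u q \<Longrightarrow> Cl (p,u,q) \<in> g_arr (FP D)"
  unfolding FP_def fpcls_def by (auto intro: quotientI simp: paths_def)

lemma arr_cls: "X \<in> g_arr (FP D) \<Longrightarrow> \<exists>p u q. walk D p u q \<and> X = Cl (p,u,q)"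
  unfolding FP_def fpcls_def by (auto elim!: quotientE simp: paths_def)

lemma cls_eq: "walk D p u q \<Longrightarrow> walk D p' u' q' \<Longrightarrow>
    Cl (p,u,q) = Cl (p',u',q') \<longleftrightarrow> p' = p \<and> q' = q \<and> weq p q u u'"
  unfolding fpcls_def weq_def
  using eq_equiv_class_iff[OF fp_equiv] fp_eq_ends[of "(p,u,q)" "(p',u',q')"]
  by (auto simp: paths_def)

text \<open>The operations of \<open>FP D\<close> pick arbitrary representatives; any representative of a class
  is an equivalent word with the same end points.\<close>
lemma some_cls: "walk D p u q \<Longrightarrow> \<exists>u'. (SOME \<rho>. \<rho> \<in> Cl (p,u,q)) = (p,u',q) \<and> weq p q u u'"
proof -
  assume w: "walk D p u q"
  have "(p,u,q) \<in> Cl (p,u,q)" using weq_refl[OF w] by (simp add: fpcls_def weq_def)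
  then have "(SOME \<rho>. \<rho> \<in> Cl (p,u,q)) \<in> Cl (p,u,q)" by (rule someI)
  moreover obtain a u' b where "(SOME \<rho>. \<rho> \<in> Cl (p,u,q)) = (a,u',b)" by (metis prod.exhaust)
  ultimately show ?thesis
    unfolding fpcls_def weq_def using fp_eq_ends[of "(p,u,q)" "(a,u',b)"] by auto
qed

lemma FP_src: "walk D p u q \<Longrightarrow> g_src (FP D) (Cl (p,u,q)) = p"
  and FP_tgt: "walk D p u q \<Longrightarrow> g_tgt (FP D) (Cl (p,u,q)) = q"
  using some_cls by (fastforce simp: FP_def)+

lemma FP_comp: "walk D p u r \<Longrightarrow> walk D r w q \<Longrightarrow>
    g_comp (FP D) (Cl (p,u,r)) (Cl (r,w,q)) = Cl (p, u @ w, q)"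
proof -
  assume a: "walk D p u r" "walk D r w q"
  obtain u' where u': "(SOME \<rho>. \<rho> \<in> Cl (p,u,r)) = (p,u',r)" "weq p r u u'"
    using some_cls[OF a(1)] by blast
  obtain w' where w': "(SOME \<rho>. \<rho> \<in> Cl (r,w,q)) = (r,w',q)" "weq r q w w'"
    using some_cls[OF a(2)] by blast
  have "g_comp (FP D) (Cl (p,u,r)) (Cl (r,w,q)) = Cl (p, u' @ w', q)"
    using u' w' by (simp add: FP_def pconc_def)
  also have "\<dots> = Cl (p, u @ w, q)"
    using cls_eq weq_walk weq_app[OF u'(2) w'(2)] by blast
  finally show ?thesis .
qed

lemma FP_inv: "walk D p u q \<Longrightarrow> g_inv (FP D) (Cl (p,u,q)) = Cl (q, rv u, p)"
proof -
  assume a: "walk D p u q"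
  obtain u' where u': "(SOME \<rho>. \<rho> \<in> Cl (p,u,q)) = (p,u',q)" "weq p q u u'"
    using some_cls[OF a] by blast
  have "g_inv (FP D) (Cl (p,u,q)) = Cl (q, rv u', p)"
    using u' by (simp add: FP_def pinv_def)
  also have "\<dots> = Cl (q, rv u, p)"
    using cls_eq weq_walk weq_rev[OF u'(2)] by metis
  finally show ?thesis .
qed

section \<open>The subgroupoid \<open>J\<^sub>\<circledast>(B)\<close> in terms of words\<close>

definition bw :: "'b \<Rightarrow> ('v + 'h) list" where
  "bw A = [Inr (btop D A), Inl (brgt D A), Inr (H.iv (bbot D A)), Inl (V.iv (blft D A))]"

lemma bw_walk: "A \<in> boxes D \<Longrightarrow> walk D (hl D (btop D A)) (bw A) (hl D (btop D A))"
  by (auto simp: bw_def corner_tl corner_tr corner_bl corner_br)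

inductive Jword :: "'p \<Rightarrow> ('v + 'h) list \<Rightarrow> bool" where
  box: "A \<in> boxes D \<Longrightarrow> Jword (hl D (btop D A)) (bw A)"
| comp: "Jword p u \<Longrightarrow> Jword p w \<Longrightarrow> Jword p (u @ w)"
| inv: "Jword p u \<Longrightarrow> Jword p (rv u)"
| equiv: "Jword p u \<Longrightarrow> weq p p u w \<Longrightarrow> Jword p w"

lemma Jword_walk: "Jword p u \<Longrightarrow> walk D p u p"
  by (induction rule: Jword.induct) (auto simp: walk_append bw_walk walk_rev dest: weq_walk)

lemma Jword_Jfp: "Jword p u \<Longrightarrow> Cl (p,u,p) \<in> Jfp D"
proof (induction rule: Jword.induct)
  case (box A)
  then show ?case using Jfp.gen[of A D] by (simp add: box_word_def bw_def)
next
  case (comp p u w)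
  have "walk D p u p" "walk D p w p" using comp.hyps Jword_walk by auto
  then show ?case
    using Jfp.comp[OF comp.IH] FP_comp[of p u p w p] FP_src[of p w p] FP_tgt[of p u p] by simp
next
  case (inv p u)
  then show ?case using Jfp.inv[OF inv.IH] Jword_walk FP_inv by simp
next
  case (equiv p u w)
  then show ?case using cls_eq[of p u p p w p] weq_walk by simp
qed

lemma Jfp_Jword: "X \<in> Jfp D \<Longrightarrow> \<exists>p u. Jword p u \<and> X = Cl (p,u,p)"
proof (induction rule: Jfp.induct)
  case (gen A)
  then show ?case using Jword.box by (fastforce simp: box_word_def bw_def)
next
  case (comp X Y)
  then obtain p u q w where X: "Jword p u" "X = Cl (p,u,p)" and Y: "Jword q w" "Y = Cl (q,w,q)"
    by blast
  have wk: "walk D p u p" "walk D q w q" using X Y Jword_walk by auto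
  then have "q = p" using comp.hyps(3) X Y FP_src FP_tgt by simp
  then have "g_comp (FP D) X Y = Cl (p, u @ w, p)" using X Y wk FP_comp by simp
  then show ?case using Jword.comp[OF X(1)] Y \<open>q = p\<close> by blast
next
  case (inv X)
  then obtain p u where J: "Jword p u" "X = Cl (p,u,p)" by blast
  then have "g_inv (FP D) X = Cl (p, rv u, p)" using Jword_walk FP_inv by simp
  then show ?case using Jword.inv[OF J(1)] by blast
qed

lemma Jfp_iff:
  assumes wk: "walk D p u q"
  shows "Cl (p,u,q) \<in> Jfp D \<longleftrightarrow> q = p \<and> Jword p u"
proof
  assume "Cl (p,u,q) \<in> Jfp D"
  then obtain p' u' where J: "Jword p' u'" "Cl (p,u,q) = Cl (p',u',p')" using Jfp_Jword by blast
  then have "p' = p" "p' = q" "weq p q u u'" using cls_eq[OF wk Jword_walk] by auto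
  then show "q = p \<and> Jword p u" using Jword.equiv[OF J(1)] weq_sym by simp
qed (use Jword_Jfp in auto)

section \<open>\<open>J\<^sub>\<circledast>(B)\<close> is normal\<close>

lemma bw_vcomp:
  assumes A: "A \<in> boxes D" and B: "B \<in> boxes D" and BA: "bbot D B = btop D A"
  shows "weq (vt D (blft D B)) (vt D (blft D B)) (rv (bw B) @ bw (BV.cmp B A))
           (Inl (blft D B) # bw A @ [Inl (V.iv (blft D B))])"
proof -
  let ?p = "vt D (blft D B)"
  let ?x = "btop D A" and ?g = "brgt D A" and ?y = "bbot D A" and ?h = "blft D A"
  let ?xB = "btop D B" and ?gB = "brgt D B" and ?hB = "blft D B"
  have BAV: "B \<in> g_arr (dg_BV D)" "A \<in> g_arr (dg_BV D)" using A B BV_arr by auto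
  have sides: "btop D (BV.cmp B A) = ?xB" "bbot D (BV.cmp B A) = ?y"
    "blft D (BV.cmp B A) = V.cmp ?hB ?h" "brgt D (BV.cmp B A) = V.cmp ?gB ?g"
    using BAV BA vcomp_lft[OF B A BA] vcomp_rgt[OF B A BA] by simp_all
  note co = corner_tl[OF A] corner_tr[OF A] corner_bl[OF A] corner_br[OF A]
    corner_tl[OF B] corner_tr[OF B] corner_bl[OF B] corner_br[OF B]
  have "weq ?p ?p (rv (bw B) @ bw (BV.cmp B A))
      ([Inl ?hB, Inr ?x, Inl (V.iv ?gB)] @ [Inl (V.cmp ?gB ?g), Inr (H.iv ?y), Inl (V.iv (V.cmp ?hB ?h))])"
    using weq_cancel[of ?p "[Inl ?hB, Inr ?x, Inl (V.iv ?gB)]" "Inr (H.iv ?xB)"] A B BA co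
    by (simp add: bw_def sides)
  also have "weq ?p ?p \<dots> [Inl ?hB, Inr ?x, Inl ?g, Inr (H.iv ?y), Inl (V.iv (V.cmp ?hB ?h))]"
    using weq_mergeV[of ?p "[Inl ?hB, Inr ?x]" "V.iv ?gB" "V.cmp ?gB ?g"] A B BA co
    by (simp add: V.cancel_left)
  also have "weq ?p ?p \<dots> (Inl ?hB # bw A @ [Inl (V.iv ?hB)])"
    using weq_sym[OF weq_mergeV[of ?p "[Inl ?hB, Inr ?x, Inl ?g, Inr (H.iv ?y)]" "V.iv ?h" "V.iv ?hB" "[]"]]
      A B BA co
    by (simp add: bw_def V.inv_comp)
  finally show ?thesis .
qed

lemma bw_hcomp:
  assumes A: "A \<in> boxes D" and B: "B \<in> boxes D" and BA: "brgt D B = blft D A"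
  shows "weq (hl D (btop D B)) (hl D (btop D B)) (bw (BH.cmp B A) @ rv (bw B))
           (Inr (btop D B) # bw A @ [Inr (H.iv (btop D B))])"
proof -
  let ?p = "hl D (btop D B)"
  let ?x = "btop D A" and ?g = "brgt D A" and ?y = "bbot D A" and ?h = "blft D A"
  let ?k = "btop D B" and ?yB = "bbot D B" and ?hB = "blft D B"
  have sides: "btop D (BH.cmp B A) = H.cmp ?k ?x" "bbot D (BH.cmp B A) = H.cmp ?yB ?y"
    "blft D (BH.cmp B A) = ?hB" "brgt D (BH.cmp B A) = ?g"
    using A B BA hcomp_top[OF B A BA] hcomp_bot[OF B A BA] by simp_all
  note co = corner_tl[OF A] corner_tr[OF A] corner_bl[OF A] corner_br[OF A]
    corner_tl[OF B] corner_tr[OF B] corner_bl[OF B] corner_br[OF B]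
  have "weq ?p ?p (bw (BH.cmp B A) @ rv (bw B))
      ([Inr (H.cmp ?k ?x), Inl ?g, Inr (H.iv (H.cmp ?yB ?y))] @ [Inr ?yB, Inl (V.iv ?h), Inr (H.iv ?k)])"
    using weq_cancel[of ?p "[Inr (H.cmp ?k ?x), Inl ?g, Inr (H.iv (H.cmp ?yB ?y))]" "Inl (V.iv ?hB)"]
      A B BA co
    by (simp add: bw_def sides)
  also have "weq ?p ?p \<dots> [Inr (H.cmp ?k ?x), Inl ?g, Inr (H.iv ?y), Inl (V.iv ?h), Inr (H.iv ?k)]"
    using weq_mergeH[of ?p "[Inr (H.cmp ?k ?x), Inl ?g]" "H.iv (H.cmp ?yB ?y)" ?yB] A B BA co
    by (simp add: H.inv_comp_cancel)
  also have "weq ?p ?p \<dots> (Inr ?k # bw A @ [Inr (H.iv ?k)])"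
    using weq_sym[OF weq_mergeH[of ?p "[]" ?k ?x]] A B BA co by (simp add: bw_def)
  finally show ?thesis .
qed

text \<open>Conjugating a generator \<open>[A]\<close> by a single letter stays in \<open>J\<^sub>\<circledast>(B)\<close>: fill the corner
  formed by the letter and a side of \<open>A\<close>, and compose the new box with \<open>A\<close>.\<close>
lemma Jword_conj_box:
  assumes A: "A \<in> boxes D" and a: "lok D a" "ltgt D a = hl D (btop D A)"
  shows "Jword (lsrc D a) (a # bw A @ [linv D a])"
proof (cases a)
  case (Inl f)
  then obtain B where B: "B \<in> boxes D" "bbot D B = btop D A" "blft D B = f"
    using fill_bl[of "btop D A" f] A a by auto
  have BA: "BV.cmp B A \<in> boxes D"
    using B A BV_arr BV.comp_arr[of B A] by simp
  have "btop D (BV.cmp B A) = btop D B"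
    using A B BV_arr BV.src_comp[of B A] by simp
  then have "Jword (hl D (btop D B)) (rv (bw B) @ bw (BV.cmp B A))"
    using Jword.comp[OF Jword.inv[OF Jword.box[OF B(1)]]] Jword.box[OF BA] by simp
  then have "Jword (vt D f) (rv (bw B) @ bw (BV.cmp B A))"
    using B corner_tl[OF B(1)] by simp
  then show ?thesis using Jword.equiv bw_vcomp[OF A B(1,2)] B Inl by simp
next
  case (Inr k)
  then obtain B where B: "B \<in> boxes D" "btop D B = k" "brgt D B = blft D A"
    using fill_tr[of k "blft D A"] A a corner_tl by auto
  have BA: "BH.cmp B A \<in> boxes D" using B A by simp
  have "hl D (btop D (BH.cmp B A)) = hl D k"
    using A B a Inr hcomp_top[OF B(1) A B(3)] corner_tl[OF A] corner_tr[OF B(1)] by simp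
  then have "Jword (hl D k) (bw (BH.cmp B A))" using Jword.box[OF BA] by simp
  then have "Jword (hl D k) (bw (BH.cmp B A) @ rv (bw B))"
    using Jword.comp Jword.inv[OF Jword.box[OF B(1)]] B by simp
  then show ?thesis using Jword.equiv bw_hcomp[OF A B(1,3)] B Inr by simp
qed

lemma Jword_conj_letter:
  "Jword p u \<Longrightarrow> lok D a \<Longrightarrow> ltgt D a = p \<Longrightarrow> Jword (lsrc D a) (a # u @ [linv D a])"
proof (induction arbitrary: a rule: Jword.induct)
  case (box A)
  then show ?case by (rule Jword_conj_box)
next
  case (comp p u w)
  have J: "Jword (lsrc D a) ((a # u @ [linv D a]) @ (a # w @ [linv D a]))"
    using Jword.comp comp by blast
  have "weq (lsrc D a) (lsrc D a) ((a # u) @ linv D a # linv D (linv D a) # w @ [linv D a])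
      ((a # u) @ w @ [linv D a])"
    by (rule weq_cancel) (use Jword_walk[OF J] comp in simp)
  then show ?case using Jword.equiv[OF J] comp by simp
next
  case (inv p u)
  then show ?case using Jword.inv[OF inv.IH[OF inv.prems]] by simp
next
  case (equiv p u w)
  have "weq (lsrc D a) (lsrc D a) ([a] @ u @ [linv D a]) ([a] @ w @ [linv D a])"
    by (rule weq_ctx[OF equiv.hyps(2)]) (use equiv.prems in \<open>auto dest: walk_obj weq_walk\<close>)
  then show ?case using Jword.equiv equiv.IH[OF equiv.prems] by simp
qed

lemma Jword_conj: "Jword p u \<Longrightarrow> walk D q c p \<Longrightarrow> Jword q (c @ u @ rv c)"
proof (induction c arbitrary: q)
  case (Cons a c)
  then have "Jword (ltgt D a) (c @ u @ rv c)" by simp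
  from Jword_conj_letter[OF this, of a] Cons.prems show ?case by auto
qed simp

section \<open>Equality in the diagonal groupoid\<close>

definition JE :: "'p \<Rightarrow> 'p \<Rightarrow> ('v + 'h) list \<Rightarrow> ('v + 'h) list \<Rightarrow> bool" where
  "JE p q u w \<longleftrightarrow> walk D p u q \<and> walk D p w q \<and> Jword p (u @ rv w)"

text \<open>The empty loop lies in \<open>J\<^sub>\<circledast>(B)\<close>: it is \<open>[A][A]\<inverse>\<close> for a box filling the identity corner at \<open>p\<close>.\<close>
lemma Jword_empty:
  assumes p: "p \<in> dg_obj D"
  shows "Jword p []"
proof -
  obtain A where A: "A \<in> boxes D" "btop D A = H.ide p" "blft D A = V.ide p"
    using fill_tl[of "H.ide p" "V.ide p"] p by auto
  have corner: "hl D (btop D A) = p" using A p by simp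
  have "Jword p (bw A @ rv (bw A))"
    using Jword.comp[OF Jword.box[OF A(1)] Jword.inv[OF Jword.box[OF A(1)]]] corner by simp
  moreover have "weq p p (bw A @ rv (bw A)) []" using weq_inv_r[OF bw_walk[OF A(1)]] corner by simp
  ultimately show ?thesis by (rule Jword.equiv)
qed

lemma JE_refl: "walk D p u q \<Longrightarrow> JE p q u u"
  unfolding JE_def using Jword.equiv[OF Jword_empty weq_sym[OF weq_inv_r]] walk_obj by blast

lemma JE_sym: "JE p q u w \<Longrightarrow> JE p q w u"
  using Jword.inv[of p "u @ rv w"] rv_rv[of p w q] unfolding JE_def by simp

lemma JE_trans[trans]: "JE p q u w \<Longrightarrow> JE p q w z \<Longrightarrow> JE p q u z"
proof -
  assume a: "JE p q u w" "JE p q w z"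
  then have J: "Jword p ((u @ rv w) @ (w @ rv z))" using Jword.comp unfolding JE_def by blast
  have "weq p p (u @ (rv w @ w) @ rv z) (u @ [] @ rv z)"
    by (rule weq_ctx[OF weq_inv_l]) (use a in \<open>auto simp: JE_def intro: walk_rev\<close>)
  then have "Jword p (u @ rv z)" using Jword.equiv[OF J] by simp
  then show ?thesis using a by (simp add: JE_def)
qed

lemma JE_weq: "weq p q u w \<Longrightarrow> JE p q u w"
proof -
  assume a: "weq p q u w"
  then have u: "walk D p u q" using weq_walk by blast
  have "weq p p (u @ rv u @ []) (u @ rv w @ [])"
    by (rule weq_ctx[OF weq_rev[OF a]]) (use u walk_obj in auto)
  then show ?thesis
    using Jword.equiv JE_refl[OF u] a weq_walk unfolding JE_def by auto
qed

text \<open>Normality makes \<open>JE\<close> a congruence for concatenation.\<close>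
lemma JE_app: "JE p r u u' \<Longrightarrow> JE r q w w' \<Longrightarrow> JE p q (u @ w) (u' @ w')"
proof -
  assume a: "JE p r u u'" "JE r q w w'"
  have wu: "walk D p u r" "walk D p u' r" "walk D r w q" "walk D r w' q"
    using a by (auto simp: JE_def)
  have "Jword p (u @ (w @ rv w') @ rv u)" using Jword_conj a wu unfolding JE_def by blast
  then have J: "Jword p ((u @ w @ rv w') @ (rv u @ u) @ rv u')"
    using Jword.comp a unfolding JE_def by fastforce
  have "weq p p ((u @ w @ rv w') @ (rv u @ u) @ rv u') ((u @ w @ rv w') @ [] @ rv u')"
    by (rule weq_ctx[OF weq_inv_l[OF wu(1)]]) (use wu in \<open>auto simp: walk_append intro: walk_rev\<close>)
  then have "Jword p ((u @ w) @ rv (u' @ w'))" using Jword.equiv[OF J] by simp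
  then show ?thesis using wu by (auto simp: JE_def walk_append)
qed

lemma Deq_cls:
  assumes "walk D p u q" "walk D p' w q'"
  shows "(Cl (p,u,q), Cl (p',w,q')) \<in> Deq D \<longleftrightarrow> p' = p \<and> q' = q \<and> JE p q u w"
proof -
  have "p' = p \<and> q' = q \<Longrightarrow> g_comp (FP D) (Cl (p,u,q)) (g_inv (FP D) (Cl (p',w,q'))) = Cl (p, u @ rv w, p)"
    using assms FP_inv FP_comp walk_rev by simp
  moreover have "walk D p (u @ rv w) p" if "p' = p" "q' = q"
    using assms that walk_rev walk_append by blast
  ultimately show ?thesis
    using assms cls_in FP_src FP_tgt Jfp_iff unfolding Deq_def JE_def by auto
qed

lemma Deq_pair: "(X, Y) \<in> Deq D \<Longrightarrow>
    \<exists>p q u w. walk D p u q \<and> walk D p w q \<and> X = Cl (p,u,q) \<and> Y = Cl (p,w,q) \<and> JE p q u w"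
proof -
  assume d: "(X, Y) \<in> Deq D"
  then have "X \<in> g_arr (FP D)" "Y \<in> g_arr (FP D)" by (auto simp: Deq_def)
  then obtain p u q p' w q' where "walk D p u q" "X = Cl (p,u,q)" "walk D p' w q'" "Y = Cl (p',w,q')"
    using arr_cls by meson
  then show ?thesis using d Deq_cls by auto
qed

lemma Deq_equiv: "equiv (g_arr (FP D)) (Deq D)"
proof (rule equivI)
  show "Deq D \<subseteq> g_arr (FP D) \<times> g_arr (FP D)" by (auto simp: Deq_def)
  show "refl_on (g_arr (FP D)) (Deq D)"
  proof (rule refl_onI)
    fix X assume "X \<in> g_arr (FP D)"
    then obtain p u q where "walk D p u q" "X = Cl (p,u,q)" using arr_cls by blast
    then show "(X, X) \<in> Deq D" using Deq_cls JE_refl by simp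
  qed
  show "sym (Deq D)"
  proof (rule symI)
    fix X Y assume "(X, Y) \<in> Deq D"
    then obtain p q u w where "walk D p u q" "walk D p w q" "X = Cl (p,u,q)" "Y = Cl (p,w,q)" "JE p q u w"
      using Deq_pair by blast
    then show "(Y, X) \<in> Deq D" using Deq_cls JE_sym by simp
  qed
  show "trans (Deq D)"
  proof (rule transI)
    fix X Y Z assume "(X, Y) \<in> Deq D" "(Y, Z) \<in> Deq D"
    obtain p q u w where
      XY: "walk D p u q" "walk D p w q" "X = Cl (p,u,q)" "Y = Cl (p,w,q)" "JE p q u w"
      using Deq_pair[OF \<open>(X, Y) \<in> Deq D\<close>] by blast
    obtain p' q' w' z where
      YZ: "walk D p' w' q'" "walk D p' z q'" "Y = Cl (p',w',q')" "Z = Cl (p',z,q')" "JE p' q' w' z"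
      using Deq_pair[OF \<open>(Y, Z) \<in> Deq D\<close>] by blast
    have ends: "p' = p" "q' = q" and ww': "weq p q w w'"
      using cls_eq[OF XY(2) YZ(1)] XY(4) YZ(3) by auto
    have "JE p q u w'" using JE_trans[OF XY(5) JE_weq[OF ww']] .
    then have "JE p q u z" using JE_trans YZ(5) ends by simp
    then show "(X, Z) \<in> Deq D" using XY YZ ends Deq_cls by simp
  qed
qed

abbreviation K :: "'p \<Rightarrow> ('v + 'h) list \<Rightarrow> 'p \<Rightarrow> ('p,'v,'h) path set set" where
  "K p u q \<equiv> Deq D `` {Cl (p,u,q)}"

lemma K_eq: "walk D p u q \<Longrightarrow> walk D p' w q' \<Longrightarrow> K p u q = K p' w q' \<longleftrightarrow> p' = p \<and> q' = q \<and> JE p q u w"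
  by (simp add: eq_equiv_class_iff[OF Deq_equiv cls_in cls_in] Deq_cls)

lemma K_in: "walk D p u q \<Longrightarrow> K p u q \<in> g_arr (Dg D)"
  unfolding Dg_def by (auto intro: quotientI cls_in)

lemma arr_K: "Z \<in> g_arr (Dg D) \<Longrightarrow> \<exists>p u q. walk D p u q \<and> Z = K p u q"
  unfolding Dg_def by (auto elim!: quotientE dest!: arr_cls)

lemma in_K: "X \<in> K p u q \<Longrightarrow> walk D p u q \<Longrightarrow> \<exists>w. X = Cl (p,w,q) \<and> walk D p w q \<and> JE p q u w"
proof -
  assume a: "X \<in> K p u q" "walk D p u q"
  then have d: "(Cl (p,u,q), X) \<in> Deq D" by simp
  then obtain p' w q' where "walk D p' w q'" "X = Cl (p',w,q')"
    using arr_cls[of X] by (auto simp: Deq_def)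
  then show ?thesis using d a Deq_cls by auto
qed

lemma some_K: "walk D p u q \<Longrightarrow> \<exists>w. (SOME X. X \<in> K p u q) = Cl (p,w,q) \<and> walk D p w q \<and> JE p q u w"
proof -
  assume w: "walk D p u q"
  have "Cl (p,u,q) \<in> K p u q" using Deq_cls[OF w w] JE_refl[OF w] by simp
  then have "(SOME X. X \<in> K p u q) \<in> K p u q" by (rule someI)
  then show ?thesis using w in_K by blast
qed

lemma Dg_src: "walk D p u q \<Longrightarrow> g_src (Dg D) (K p u q) = p"
  and Dg_tgt: "walk D p u q \<Longrightarrow> g_tgt (Dg D) (K p u q) = q"
  using some_K FP_src FP_tgt by (fastforce simp: Dg_def)+

lemma Dg_comp:
  assumes "walk D p u r" "walk D r w q"
  shows "g_comp (Dg D) (K p u r) (K r w q) = K p (u @ w) q"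
proof -
  obtain u' where u': "(SOME X. X \<in> K p u r) = Cl (p,u',r)" "walk D p u' r" "JE p r u u'"
    using some_K[OF assms(1)] by blast
  obtain w' where w': "(SOME X. X \<in> K r w q) = Cl (r,w',q)" "walk D r w' q" "JE r q w w'"
    using some_K[OF assms(2)] by blast
  have "g_comp (Dg D) (K p u r) (K r w q) = K p (u' @ w') q"
    using u' w' FP_comp by (simp add: Dg_def)
  also have "\<dots> = K p (u @ w) q"
    using K_eq u' w' assms walk_append JE_sym[OF JE_app[OF u'(3) w'(3)]] by blast
  finally show ?thesis .
qed

section \<open>The map \<open>\<phi>\<close>\<close>

lemma VxH_walk: "(v,h) \<in> VxH D \<Longrightarrow> walk D (vt D v) [Inl v, Inr h] (hr D h)"
  unfolding VxH_def by auto

lemma phi0_eq: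
  assumes "(v,h) \<in> VxH D"
  shows "phi0 D (v,h) = K (vt D v) [Inl v, Inr h] (hr D h)"
proof -
  have "walk D (vt D v) [Inl v] (vb D v)" "walk D (hl D h) [Inr h] (hr D h)" "vb D v = hl D h"
    using assms by (auto simp: VxH_def)
  then show ?thesis
    unfolding phi0_def jD_def iD_def using Dg_comp[of "vt D v" "[Inl v]" "vb D v" "[Inr h]" "hr D h"]
    by simp
qed

lemma simB_ker: "simB D = ker_rel (VxH D) (phi0 D)"
proof -
  have "((v1,h1),(v2,h2)) \<in> simB D \<longleftrightarrow> ((v1,h1),(v2,h2)) \<in> ker_rel (VxH D) (phi0 D)"
    if vh: "(v1,h1) \<in> VxH D" "(v2,h2) \<in> VxH D" for v1 h1 v2 h2
  proof -
    let ?w = "[Inl v1, Inr h1, Inr (H.iv h2), Inl (V.iv v2)]"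
    have "phi0 D (v1,h1) = phi0 D (v2,h2) \<longleftrightarrow>
        vt D v2 = vt D v1 \<and> hr D h2 = hr D h1 \<and> JE (vt D v1) (hr D h1) [Inl v1, Inr h1] [Inl v2, Inr h2]"
      using phi0_eq[OF vh(1)] phi0_eq[OF vh(2)] K_eq[OF VxH_walk[OF vh(1)] VxH_walk[OF vh(2)]] by simp
    also have "\<dots> \<longleftrightarrow> hr D h1 = hr D h2 \<and> vt D v1 = vt D v2 \<and> Jword (vt D v1) ?w"
      using VxH_walk[OF vh(1)] VxH_walk[OF vh(2)] unfolding JE_def by auto
    also have "\<dots> \<longleftrightarrow> ((v1,h1),(v2,h2)) \<in> simB D"
    proof (cases "hr D h1 = hr D h2")
      case True
      then have "walk D (vt D v1) ?w (vt D v2)" using vh by (simp add: VxH_def)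
      then show ?thesis using Jfp_iff[of "vt D v1" ?w "vt D v2"] vh by (auto simp: simB_def)
    qed (simp add: simB_def)
    finally show ?thesis using vh by (simp add: ker_rel_def)
  qed
  moreover have "simB D \<subseteq> VxH D \<times> VxH D" "ker_rel (VxH D) (phi0 D) \<subseteq> VxH D \<times> VxH D"
    by (auto simp: simB_def ker_rel_def)
  ultimately show ?thesis by auto
qed

lemma phi_class: "x \<in> VxH D \<Longrightarrow> phi D (simB D `` {x}) = phi0 D x"
  unfolding phi_def simB_ker by (rule ker_rel_class_image)

lemma phi0_src: "x \<in> VxH D \<Longrightarrow> g_src (Dg D) (phi0 D x) = vt D (fst x)"
  and phi0_tgt: "x \<in> VxH D \<Longrightarrow> g_tgt (Dg D) (phi0 D x) = hr D (snd x)"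
  using phi0_eq VxH_walk Dg_src Dg_tgt by (cases x; simp)+

text \<open>A horizontal arrow followed by a vertical one can be rewritten, modulo \<open>J\<^sub>\<circledast>(B)\<close>, as a
  vertical arrow followed by a horizontal one: fill the corner they form with a box \<open>A\<close>;
  then \<open>k g (f y)\<inverse>\<close> is the generator \<open>[A]\<close>.\<close>
lemma JE_swap:
  assumes "k \<in> g_arr (dg_H D)" "g \<in> g_arr (dg_V D)" "hr D k = vt D g"
  shows "\<exists>f y. f \<in> g_arr (dg_V D) \<and> y \<in> g_arr (dg_H D) \<and> vt D f = hl D k \<and> vb D f = hl D y \<and>
      hr D y = vb D g \<and> JE (hl D k) (vb D g) [Inr k, Inl g] [Inl f, Inr y]"
proof -
  obtain A where A: "A \<in> boxes D" "btop D A = k" "brgt D A = g" using fill_tr assms by blast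
  have "Jword (hl D k) ([Inr k, Inl g] @ rv [Inl (blft D A), Inr (bbot D A)])"
    using Jword.box[OF A(1)] A by (simp add: bw_def)
  then show ?thesis
    using A assms corner_tl corner_bl corner_br by (intro exI[of _ "blft D A"] exI[of _ "bbot D A"])
      (auto simp: JE_def)
qed

lemma normal_form:
  "walk D p u q \<Longrightarrow> \<exists>v h. (v,h) \<in> VxH D \<and> vt D v = p \<and> hr D h = q \<and> JE p q u [Inl v, Inr h]"
proof (induction u arbitrary: p)
  case Nil
  then have p: "q = p" "p \<in> dg_obj D" by auto
  have "weq p p [Inl (V.ide p), Inr (H.ide p)] [Inr (H.ide p)]"
    by (rule weq_step[OF fp_step.idV[OF p(2), of "[]"], simplified]) (use p in simp)
  also have "weq p p \<dots> []"
    by (rule weq_step[OF fp_step.idH[OF p(2), of "[]" "[]"], simplified]) (use p in simp)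
  finally have "JE p p [] [Inl (V.ide p), Inr (H.ide p)]" by (rule JE_sym[OF JE_weq])
  then show ?case using p by (intro exI[of _ "V.ide p"] exI[of _ "H.ide p"]) (simp add: VxH_def)
next
  case (Cons a u)
  then have a: "lok D a" "lsrc D a = p" "walk D (ltgt D a) u q" by auto
  obtain v h where vh: "(v,h) \<in> VxH D" "vt D v = ltgt D a" "hr D h = q" "JE (ltgt D a) q u [Inl v, Inr h]"
    using Cons.IH[OF a(3)] by blast
  then have vh': "v \<in> g_arr (dg_V D)" "h \<in> g_arr (dg_H D)" "vb D v = hl D h" by (auto simp: VxH_def)
  have "JE p q ([a] @ u) ([a] @ [Inl v, Inr h])"
    using JE_app[OF JE_refl vh(4), of p "[a]"] a walk_obj by auto
  then have Ja: "JE p q (a # u) [a, Inl v, Inr h]" by simp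
  show ?case
  proof (cases a)
    case (Inl f)
    have "weq p q [Inl f, Inl v, Inr h] [Inl (V.cmp f v), Inr h]"
      using weq_mergeV[of p "[]" f v "[Inr h]" q] Inl a vh vh' walk_obj[OF a(3)] by simp
    then have "JE p q (a # u) [Inl (V.cmp f v), Inr h]" using JE_trans[OF Ja] JE_weq Inl by simp
    then show ?thesis using Inl a vh vh'
      by (intro exI[of _ "V.cmp f v"] exI[of _ h]) (simp add: VxH_def)
  next
    case (Inr k)
    obtain f y where fy: "f \<in> g_arr (dg_V D)" "y \<in> g_arr (dg_H D)" "vt D f = p" "vb D f = hl D y"
        "hr D y = hl D h" "JE p (hl D h) [Inr k, Inl v] [Inl f, Inr y]"
      using JE_swap[of k v] Inr a vh vh' by auto
    have "JE p q [Inr k, Inl v, Inr h] [Inl f, Inr y, Inr h]"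
      using JE_app[OF fy(6) JE_refl[of "hl D h" "[Inr h]" q]] vh vh' walk_obj[OF a(3)] by simp
    also have "JE p q \<dots> [Inl f, Inr (H.cmp y h)]"
      using JE_weq weq_mergeH[of p "[Inl f]" y h "[]" q] fy vh vh' walk_obj[OF a(3)] by simp
    finally have "JE p q (a # u) [Inl f, Inr (H.cmp y h)]" using JE_trans[OF Ja] Inr by simp
    then show ?thesis using fy vh vh'
      by (intro exI[of _ f] exI[of _ "H.cmp y h"]) (simp add: VxH_def)
  qed
qed

lemma phi0_image: "phi0 D ` VxH D = g_arr (Dg D)"
proof
  show "phi0 D ` VxH D \<subseteq> g_arr (Dg D)"
    using phi0_eq VxH_walk K_in by auto
  show "g_arr (Dg D) \<subseteq> phi0 D ` VxH D"
  proof
    fix Z assume "Z \<in> g_arr (Dg D)"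
    then obtain p u q where Z: "walk D p u q" "Z = K p u q" using arr_K by blast
    obtain v h where vh: "(v,h) \<in> VxH D" "vt D v = p" "hr D h = q" "JE p q u [Inl v, Inr h]"
      using normal_form[OF Z(1)] by blast
    then have "Z = phi0 D (v,h)" using Z phi0_eq K_eq[OF Z(1) VxH_walk[OF vh(1)]] by simp
    then show "Z \<in> phi0 D ` VxH D" using vh(1) by blast
  qed
qed

end

theorem proposition3p1:
  fixes D :: "('p,'v,'h,'b) dgrpd"
  assumes "double_groupoid D" and "slim D" and "filling D"
  shows "equiv (VxH D) (simB D) \<and>
         phi0 D respects simB D \<and>
         bij_betw (phi D) (VxH D // simB D) (g_arr (Dg D)) \<and>
         (\<forall>(v, h) \<in> VxH D.
           g_src (Dg D) (phi D (simB D `` {(v, h)})) = vt D v \<and>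
           g_tgt (Dg D) (phi D (simB D `` {(v, h)})) = hr D h)"
proof -
  interpret filling_double_groupoid D using assms(1,3) by unfold_locales
  have phi: "phi D = (\<lambda>c. the_elem (phi0 D ` c))" by (rule ext) (simp add: phi_def)
  have "equiv (VxH D) (simB D)" unfolding simB_ker by (rule equiv_ker_rel)
  moreover have "phi0 D respects simB D" unfolding simB_ker by (rule ker_rel_respects)
  moreover have "bij_betw (phi D) (VxH D // simB D) (g_arr (Dg D))"
    using ker_rel_bij[of "phi0 D" "VxH D"] unfolding phi simB_ker phi0_image .
  moreover have "\<forall>(v, h) \<in> VxH D.
      g_src (Dg D) (phi D (simB D `` {(v, h)})) = vt D v \<and>
      g_tgt (Dg D) (phi D (simB D `` {(v, h)})) = hr D h"
    using phi_class phi0_src phi0_tgt by auto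
  ultimately show ?thesis by blast
qed

end
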